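(* Let $\mathcal{H}$ be an $n$-dimensional (real or complex) Hilbert space, let $F=\{f_i\}_{i=1}^N$ be a tight frame for $\mathcal{H}$, and let $\{q_i\}_{i=1}^N$ be the weight number sequence associated with a probability sequence $\{p_i\}_{i=1}^N$. Then $S_F^{-1}F$ is the unique 1-erasure probabilistic optimal dual (POD) of $F$ if and only if $S_F^{-1}F$ is the unique 1-erasure PASOD-frame of $F$ (i.e. $\Delta_F^{(1)}=\{S_F^{-1}F\}$).
   Context: A finite sequence $F=\{f_i\}_{i=1}^N$ in $\mathcal{H}$ is a frame if there are $A,B>0$ with $A\|f\|^2\le\sum_{i=1}^N|\langle f,f_i\rangle|^2\le B\|f\|^2$ for all $f$; it is tight if one can take $A=B$. The frame operator is $S_Ff=\sum_{i=1}^N\langle f,f_i\rangle f_i$ and the canonical dual is $S_F^{-1}F=\{S_F^{-1}f_i\}_{i=1}^N$. A frame $G=\{g_i\}_{i=1}^N$ is a dual of $F$ if $f=\sum_i\langle f,f_i\rangle g_i=\sum_i\langle f,g_i\rangle f_i$ for all $f$. A probability sequence is $\{p_i\}_{i=1}^N$ with $0\le p_i\le1$, $\sum p_i=1$; weight numbers $q_i=\frac{\sum_{j} p_j}{\sum_{j} p_j-p_i}\cdot\frac{N-1}{n}$. For $\Lambda\subseteq\{1,\dots,N\}$ the error operator is $E_{\Lambda,(F,G)}f=\sum_{i\in\Lambda}q_i\langle f,f_i\rangle g_i$. Set $\mathcal{O}_P^{(1)}(F,G)=\max_{|\Lambda|=1}\|E_{\Lambda,(F,G)}\|$ and $\mathcal{A}_P^{(1)}(F,G)=\max_{|\Lambda|=1}\frac{\|E_{\Lambda,(F,G)}\|+\rho(E_{\Lambda,(F,G)})}{2}$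 ($\rho$ = spectral radius). A dual $G$ of $F$ is a 1-erasure POD of $F$ if it minimizes $\mathcal{O}_P^{(1)}(F,\cdot)$ over all duals of $F$, and a 1-erasure PASOD-frame if it minimizes $\mathcal{A}_P^{(1)}(F,\cdot)$ over all duals of $F$; $\Delta_F^{(1)}$ is the set of 1-erasure PASOD-frames of $F$. *)

theory Defs
  imports "HOL-Analysis.Analysis"
begin

text \<open>Scalars of the Hilbert space: real or complex. hconj is the complex conjugation
 (identity on the reals); to_cplx embeds the scalars into the complex numbers (used only
 to define the spectral radius via complex eigenvalues, i.e. via the complexification).\<close>

class hscalar = real_normed_field +
  fixes hconj :: "'a \<Rightarrow> 'a" and to_cplx :: "'a \<Rightarrow> complex"

instantiation real :: hscalar
begin
definition hconj_real :: "real \<Rightarrow> real" where "hconj_real x = x"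
definition to_cplx_real :: "real \<Rightarrow> complex" where "to_cplx_real x = complex_of_real x"
instance ..
end

instantiation complex :: hscalar
begin
definition hconj_complex :: "complex \<Rightarrow> complex" where "hconj_complex x = cnj x"
definition to_cplx_complex :: "complex \<Rightarrow> complex" where "to_cplx_complex x = x"
instance ..
end

text \<open>The n-dimensional Hilbert space is 'a^'n (n = CARD('n)), with inner product
 linear in the first argument; the library norm on 'a^'n is the induced Euclidean norm.\<close>

definition hip :: "'a::hscalar^'n \<Rightarrow> 'a^'n \<Rightarrow> 'a" where
  "hip x y = (\<Sum>i\<in>UNIV. x$i * hconj (y$i))"

definition is_frame :: "nat \<Rightarrow> (nat \<Rightarrow> 'a::hscalar^'n) \<Rightarrow> bool" where
  "is_frame N F \<longleftrightarrow> (\<exists>A B. A > 0 \<and> B > 0 \<and>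
     (\<forall>f. A * (norm f)^2 \<le> (\<Sum>i=1..N. (norm (hip f (F i)))^2) \<and>
          (\<Sum>i=1..N. (norm (hip f (F i)))^2) \<le> B * (norm f)^2))"

definition tight_frame :: "nat \<Rightarrow> (nat \<Rightarrow> 'a::hscalar^'n) \<Rightarrow> bool" where
  "tight_frame N F \<longleftrightarrow> (\<exists>A. A > 0 \<and>
     (\<forall>f. A * (norm f)^2 \<le> (\<Sum>i=1..N. (norm (hip f (F i)))^2) \<and>
          (\<Sum>i=1..N. (norm (hip f (F i)))^2) \<le> A * (norm f)^2))"

definition frame_op :: "nat \<Rightarrow> (nat \<Rightarrow> 'a::hscalar^'n) \<Rightarrow> 'a^'n \<Rightarrow> 'a^'n" where
  "frame_op N F f = (\<Sum>i=1..N. hip f (F i) *s F i)"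

definition canon_dual :: "nat \<Rightarrow> (nat \<Rightarrow> 'a::hscalar^'n) \<Rightarrow> nat \<Rightarrow> 'a^'n" where
  "canon_dual N F i = (THE g. frame_op N F g = F i)"

definition is_dual :: "nat \<Rightarrow> (nat \<Rightarrow> 'a::hscalar^'n) \<Rightarrow> (nat \<Rightarrow> 'a^'n) \<Rightarrow> bool" where
  "is_dual N F G \<longleftrightarrow> is_frame N G \<and>
     (\<forall>f. f = (\<Sum>i=1..N. hip f (F i) *s G i) \<and> f = (\<Sum>i=1..N. hip f (G i) *s F i))"

definition prob_seq :: "nat \<Rightarrow> (nat \<Rightarrow> real) \<Rightarrow> bool" where
  "prob_seq N p \<longleftrightarrow> (\<forall>i\<in>{1..N}. 0 \<le> p i \<and> p i \<le> 1) \<and> (\<Sum>i=1..N. p i) = 1"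

definition weight :: "nat \<Rightarrow> nat \<Rightarrow> (nat \<Rightarrow> real) \<Rightarrow> nat \<Rightarrow> real" where
  "weight N n p i = (\<Sum>j=1..N. p j) / ((\<Sum>j=1..N. p j) - p i) * ((real N - 1) / real n)"

definition err_op :: "nat \<Rightarrow> (nat \<Rightarrow> real) \<Rightarrow> (nat \<Rightarrow> 'a::hscalar^'n) \<Rightarrow> (nat \<Rightarrow> 'a^'n)
    \<Rightarrow> nat set \<Rightarrow> 'a^'n \<Rightarrow> 'a^'n" where
  "err_op N p F G \<Lambda> f =
     (\<Sum>i\<in>\<Lambda>. (of_real (weight N CARD('n) p i) * hip f (F i)) *s G i)"

definition op_norm :: "('a::hscalar^'n \<Rightarrow> 'a^'n) \<Rightarrow> real" where
  "op_norm T = Sup {norm (T f) | f. norm f \<le> 1}"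

definition cmat :: "('a::hscalar^'n \<Rightarrow> 'a^'n) \<Rightarrow> complex^'n^'n" where
  "cmat T = (\<chi> i j. to_cplx ((T (axis j 1)) $ i))"

definition spec_rad :: "('a::hscalar^'n \<Rightarrow> 'a^'n) \<Rightarrow> real" where
  "spec_rad T = Max {cmod \<mu> | \<mu>. \<exists>v::complex^'n. v \<noteq> 0 \<and> cmat T *v v = \<mu> *s v}"

definition OP1 :: "nat \<Rightarrow> (nat \<Rightarrow> real) \<Rightarrow> (nat \<Rightarrow> 'a::hscalar^'n) \<Rightarrow> (nat \<Rightarrow> 'a^'n) \<Rightarrow> real" where
  "OP1 N p F G = Max {op_norm (err_op N p F G \<Lambda>) | \<Lambda>. \<Lambda> \<subseteq> {1..N} \<and> card \<Lambda> = 1}"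

definition AP1 :: "nat \<Rightarrow> (nat \<Rightarrow> real) \<Rightarrow> (nat \<Rightarrow> 'a::hscalar^'n) \<Rightarrow> (nat \<Rightarrow> 'a^'n) \<Rightarrow> real" where
  "AP1 N p F G = Max {(op_norm (err_op N p F G \<Lambda>) + spec_rad (err_op N p F G \<Lambda>)) / 2
                      | \<Lambda>. \<Lambda> \<subseteq> {1..N} \<and> card \<Lambda> = 1}"

definition is_POD1 :: "nat \<Rightarrow> (nat \<Rightarrow> real) \<Rightarrow> (nat \<Rightarrow> 'a::hscalar^'n) \<Rightarrow> (nat \<Rightarrow> 'a^'n) \<Rightarrow> bool" where
  "is_POD1 N p F G \<longleftrightarrow> is_dual N F G \<and> (\<forall>G'. is_dual N F G' \<longrightarrow> OP1 N p F G \<le> OP1 N p F G')"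

definition is_PASOD1 :: "nat \<Rightarrow> (nat \<Rightarrow> real) \<Rightarrow> (nat \<Rightarrow> 'a::hscalar^'n) \<Rightarrow> (nat \<Rightarrow> 'a^'n) \<Rightarrow> bool" where
  "is_PASOD1 N p F G \<longleftrightarrow> is_dual N F G \<and> (\<forall>G'. is_dual N F G' \<longrightarrow> AP1 N p F G \<le> AP1 N p F G')"

end

theory Submission
  imports Defs
begin

(* For a tight frame with bound A we have S_F = A id, so the canonical dual is F/A.  Each
   1-erasure error operator of a dual G is the rank-one map f \<mapsto> q_i <f, f_i> g_i, whose
   norm is |q_i| |f_i| |g_i| and whose spectral radius is |q_i| |<g_i, f_i>|.  Hence
   A(G) \<le> O(G) for every dual G, with equality at F/A; this alone turns a unique PASOD F/A
   into a unique POD.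
   Conversely, let G be a dual with A(G) \<le> O := O(F/A).  Duals form an affine space, so
   G_t = (1 - t) F/A + t G is a dual.  At an index i where |q_i| |f_i|^2 / A = O, the bound
   A(G) \<le> O forces Re <g_i - f_i/A, f_i> < 0 or g_i = f_i/A, so |G_t i| does not grow for
   small t; at the other indices there is slack.  So G_t is a POD for some t > 0, hence
   G_t = F/A by uniqueness, and therefore G = F/A. *)

(* Defs leaves hconj and to_cplx unconstrained; these are the properties of complex
   conjugation and of the embedding into the complex numbers that the proof needs. *)
class hilbert_scalar = hscalar + real_inner +
  assumes hconj_mult: "hconj (x * y) = hconj x * hconj y"
    and hconj_add: "hconj (x + y) = hconj x + hconj y"
    and hconj_scaleR: "hconj (r *\<^sub>R x) = r *\<^sub>R hconj x"
    and hconj_hconj: "hconj (hconj x) = x"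
    and norm_hconj: "norm (hconj x) = norm x"
    and mult_hconj: "x * hconj x = (norm x)^2 *\<^sub>R 1"
    and to_cplx_add: "to_cplx (x + y) = to_cplx x + to_cplx y"
    and to_cplx_mult: "to_cplx (x * y) = to_cplx x * to_cplx y"
    and to_cplx_hconj: "to_cplx (hconj x) = cnj (to_cplx x)"
    and to_cplx_scaleR: "to_cplx (r *\<^sub>R x) = r *\<^sub>R to_cplx x"
    and to_cplx_one: "to_cplx 1 = 1"
    and norm_to_cplx: "cmod (to_cplx x) = norm x"
    and inner_eq_Re_to_cplx: "inner x y = Re (to_cplx (x * hconj y))"

instance real :: hilbert_scalar
proof
  fix x y r :: real
  show "x * hconj x = (norm x)^2 *\<^sub>R 1"
    by (simp add: hconj_real_def power2_eq_square)
  show "to_cplx (r *\<^sub>R x) = r *\<^sub>R to_cplx x"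
    by (simp add: to_cplx_real_def scaleR_conv_of_real)
qed (simp_all add: hconj_real_def to_cplx_real_def)

instance complex :: hilbert_scalar
proof
  fix x :: complex
  show "x * hconj x = (norm x)^2 *\<^sub>R 1"
    using complex_norm_square[of x] by (simp add: hconj_complex_def scaleR_conv_of_real)
qed (simp_all add: hconj_complex_def to_cplx_complex_def inner_complex_def)

lemma hconj_zero [simp]: "hconj (0::'a::hilbert_scalar) = 0"
  using hconj_add[of "0::'a" 0] by simp

lemma to_cplx_zero [simp]: "to_cplx (0::'a::hilbert_scalar) = 0"
  using to_cplx_add[of "0::'a" 0] by simp

lemma hconj_sum: "hconj (\<Sum>i\<in>I. f i :: 'a::hilbert_scalar) = (\<Sum>i\<in>I. hconj (f i))"
  by (induction I rule: infinite_finite_induct) (auto simp: hconj_add)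

lemma to_cplx_sum: "to_cplx (\<Sum>i\<in>I. f i :: 'a::hilbert_scalar) = (\<Sum>i\<in>I. to_cplx (f i))"
  by (induction I rule: infinite_finite_induct) (auto simp: to_cplx_add)

lemma to_cplx_of_real: "to_cplx (of_real r :: 'a::hilbert_scalar) = complex_of_real r"
  by (simp add: of_real_def to_cplx_scaleR to_cplx_one)

lemma hip_add_left: "hip (x + y) z = hip x z + hip y z"
  by (simp add: hip_def sum.distrib distrib_right)

lemma hip_smult_left: "hip (c *s x) y = c * hip x y"
  by (simp add: hip_def sum_distrib_left mult.assoc)

lemma hip_scaleR_left: "hip (r *\<^sub>R x) y = r *\<^sub>R hip x y"
  by (simp add: hip_def scaleR_sum_right)

lemma hip_zero_left [simp]: "hip 0 y = 0"
  by (simp add: hip_def)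

lemma hip_sum_left: "hip (\<Sum>i\<in>I. f i) y = (\<Sum>i\<in>I. hip (f i) y)"
  by (induction I rule: infinite_finite_induct) (simp_all add: hip_add_left)

lemma hconj_hip: "hconj (hip x y) = hip y (x::'a::hilbert_scalar^'n)"
  by (simp add: hip_def hconj_sum hconj_mult hconj_hconj mult.commute)

lemma hip_smult_right: "hip (x::'a::hilbert_scalar^'n) (c *s y) = hip x y * hconj c"
  using hconj_hip[of "c *s y" x] by (simp add: hip_smult_left hconj_mult hconj_hip mult.commute)

lemma hip_scaleR_right: "hip (x::'a::hilbert_scalar^'n) (r *\<^sub>R y) = r *\<^sub>R hip x y"
  using hconj_hip[of "r *\<^sub>R y" x] by (simp add: hip_scaleR_left hconj_scaleR hconj_hip)

lemma hip_add_right: "hip (x::'a::hilbert_scalar^'n) (y + z) = hip x y + hip x z"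
  using hconj_hip[of "y + z" x] by (simp add: hip_add_left hconj_add hconj_hip)

lemma hip_sum_right: "hip (x::'a::hilbert_scalar^'n) (\<Sum>i\<in>I. f i) = (\<Sum>i\<in>I. hip x (f i))"
  using hconj_hip[of "\<Sum>i\<in>I. f i" x] by (simp add: hip_sum_left hconj_sum hconj_hip)

lemma inner_eq_Re_hip: "inner x y = Re (to_cplx (hip x (y::'a::hilbert_scalar^'n)))"
  by (simp add: inner_vec_def hip_def to_cplx_sum inner_eq_Re_to_cplx)

lemma norm_vec_power2: "(norm (x::'a::real_normed_vector^'n))^2 = (\<Sum>i\<in>UNIV. (norm (x$i))^2)"
  by (simp add: norm_vec_def L2_set_def sum_nonneg)

lemma hip_self: "hip x (x::'a::hilbert_scalar^'n) = (norm x)^2 *\<^sub>R 1"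
  by (simp add: hip_def mult_hconj norm_vec_power2 scaleR_sum_left)

lemma norm_smult_vec: "norm (c *s (x::'a::real_normed_field^'n)) = norm c * norm x"
  by (simp add: norm_vec_def L2_set_right_distrib norm_mult)

lemma norm_hip_le: "norm (hip x y) \<le> norm x * norm (y::'a::hilbert_scalar^'n)"
proof -
  have "norm (hip x y) \<le> (\<Sum>i\<in>UNIV. norm (x$i * hconj (y$i)))"
    unfolding hip_def by (rule norm_sum)
  also have "\<dots> = (\<Sum>i\<in>UNIV. \<bar>norm (x$i)\<bar> * \<bar>norm (y$i)\<bar>)"
    by (simp add: norm_mult norm_hconj)
  also have "\<dots> \<le> norm x * norm y"
    unfolding norm_vec_def by (rule L2_set_mult_ineq)
  finally show ?thesis .
qed

lemma hip_axis: "hip (axis j 1) (u::'a::hilbert_scalar^'n) = hconj (u$j)"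
proof -
  have "hip (axis j 1) u = (\<Sum>i\<in>UNIV. if i = j then hconj (u$j) else 0)"
    unfolding hip_def by (rule sum.cong) (auto simp: axis_def)
  then show ?thesis by simp
qed

lemma scaleR_smult_left: "(r *\<^sub>R c) *s (x::'a::real_algebra^'n) = r *\<^sub>R (c *s x)"
  by (simp add: vec_eq_iff)

lemma scaleR_smult_right: "c *s (r *\<^sub>R (x::'a::real_algebra^'n)) = r *\<^sub>R (c *s x)"
  by (simp add: vec_eq_iff mult_scaleR_right)

subsection \<open>Rank-one operators\<close>

lemma op_norm_rank_one:
  fixes u g :: "'a::hilbert_scalar^'n"
  shows "op_norm (\<lambda>f. (of_real q * hip f u) *s g) = \<bar>q\<bar> * norm u * norm g"
proof -
  let ?X = "{norm ((of_real q * hip f u) *s g) | f. norm f \<le> 1}"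
  have nf: "norm ((of_real q * hip f u) *s g) = \<bar>q\<bar> * norm (hip f u) * norm g" for f
    by (simp add: norm_smult_vec norm_mult)
  have ub: "x \<le> \<bar>q\<bar> * norm u * norm g" if "x \<in> ?X" for x
  proof -
    from that obtain f where x: "x = norm ((of_real q * hip f u) *s g)" and f: "norm f \<le> 1"
      by auto
    have "norm (hip f u) \<le> norm f * norm u" by (rule norm_hip_le)
    also have "\<dots> \<le> norm u" using f by (simp add: mult_left_le_one_le)
    finally show ?thesis unfolding x nf by (intro mult_right_mono mult_left_mono) auto
  qed
  have attained: "\<bar>q\<bar> * norm u * norm g \<in> ?X"
  proof (cases "u = 0")
    case True
    then show ?thesis by (auto intro!: exI[of _ 0] simp: nf hip_def)
  next
    case False
    let ?f = "(1 / norm u) *\<^sub>R u"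
    have "norm ?f \<le> 1" using False by simp
    moreover have "norm (hip ?f u) = norm u"
      using False by (simp add: hip_scaleR_left hip_self power2_eq_square)
    ultimately show ?thesis by (intro CollectI exI[of _ ?f]) (auto simp: nf)
  qed
  show ?thesis unfolding op_norm_def
    by (rule cSup_eq_maximum[OF attained]) (use ub in blast)
qed

lemma eigenvalue_rank_one:
  fixes g v :: "complex^'n"
  assumes "v \<noteq> 0" "\<mu> \<noteq> 0" "(\<Sum>j\<in>UNIV. a j * v$j) *s g = \<mu> *s v"
  shows "\<mu> = (\<Sum>j\<in>UNIV. a j * g$j)"
proof -
  let ?L = "\<lambda>v::complex^'n. \<Sum>j\<in>UNIV. a j * v$j"
  have v: "v = (?L v / \<mu>) *s g"
    using assms(2,3) by (simp add: vec_eq_iff field_simps)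
  then have "?L v \<noteq> 0" using assms(1) by auto
  moreover have "?L (c *s g) = c * ?L g" for c
    by (simp add: sum_distrib_left mult_ac)
  then have "?L v = (?L v / \<mu>) * ?L g"
    using v by metis
  ultimately show ?thesis using assms(2) by (simp add: field_simps)
qed

lemma spec_rad_rank_one:
  fixes u g :: "'a::hilbert_scalar^'n"
  shows "spec_rad (\<lambda>f. (of_real q * hip f u) *s g) = \<bar>q\<bar> * norm (hip g u)"
proof -
  let ?T = "\<lambda>f. (of_real q * hip f u) *s g"
  define gc :: "complex^'n" where "gc = (\<chi> i. to_cplx (g$i))"
  define a where "a j = complex_of_real q * cnj (to_cplx (u$j))" for j
  define l where "l = (\<Sum>j\<in>UNIV. a j * gc$j)"
  have cmat: "cmat ?T *v v = (\<Sum>j\<in>UNIV. a j * v$j) *s gc" for v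
    by (simp add: cmat_def matrix_vector_mult_def vec_eq_iff hip_axis to_cplx_mult
        to_cplx_of_real to_cplx_hconj gc_def a_def sum_distrib_left mult_ac)
  have "l = complex_of_real q * to_cplx (hip g u)"
    by (simp add: l_def a_def gc_def hip_def to_cplx_sum to_cplx_mult to_cplx_hconj
        sum_distrib_left mult_ac)
  then have norm_l: "cmod l = \<bar>q\<bar> * norm (hip g u)"
    by (simp add: norm_mult norm_to_cplx)
  let ?S = "{cmod \<mu> | \<mu>. \<exists>v::complex^'n. v \<noteq> 0 \<and> cmat ?T *v v = \<mu> *s v}"
  have sub: "?S \<subseteq> {0, cmod l}"
    using eigenvalue_rank_one[of _ _ a gc] by (fastforce simp: cmat l_def)
  have "cmod l \<in> ?S"
  proof (cases "gc = 0")
    case False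
    then show ?thesis by (fastforce simp: cmat l_def)
  next
    case True
    then have "cmat ?T *v axis undefined 1 = l *s axis undefined 1"
      by (simp add: cmat l_def)
    moreover have "axis undefined (1::complex) \<noteq> (0::complex^'n)"
      by (simp add: axis_eq_0_iff)
    ultimately show ?thesis by blast
  qed
  moreover have "finite ?S"
    using sub by (rule finite_subset) simp
  moreover have "y \<le> cmod l" if "y \<in> ?S" for y
    using subsetD[OF sub that] by auto
  ultimately have "Max ?S = cmod l"
    by (intro Max_eqI)
  then show ?thesis unfolding spec_rad_def norm_l .
qed

lemma err_op_singleton:
  fixes F G :: "nat \<Rightarrow> 'a::hilbert_scalar^'n"
  shows "err_op N p F G {i} = (\<lambda>f. (of_real (weight N CARD('n) p i) * hip f (F i)) *s G i)"
  by (simp add: err_op_def fun_eq_iff)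

lemma card_1_subsets_image:
  "{h \<Lambda> | \<Lambda>. \<Lambda> \<subseteq> {1..N} \<and> card \<Lambda> = 1} = (\<lambda>i. h {i}) ` {1..(N::nat)}"
  by (auto simp: card_1_singleton_iff)

lemma OP1_eq_Max:
  fixes F G :: "nat \<Rightarrow> 'a::hilbert_scalar^'n"
  shows "OP1 N p F G = Max ((\<lambda>i. \<bar>weight N CARD('n) p i\<bar> * norm (F i) * norm (G i)) ` {1..N})"
  unfolding OP1_def card_1_subsets_image err_op_singleton op_norm_rank_one ..

lemma AP1_eq_Max:
  fixes F G :: "nat \<Rightarrow> 'a::hilbert_scalar^'n"
  shows "AP1 N p F G = Max ((\<lambda>i. (\<bar>weight N CARD('n) p i\<bar> * norm (F i) * norm (G i)
      + \<bar>weight N CARD('n) p i\<bar> * norm (hip (G i) (F i))) / 2) ` {1..N})"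
  unfolding AP1_def card_1_subsets_image err_op_singleton op_norm_rank_one spec_rad_rank_one ..

lemma AP1_le_OP1:
  fixes F G :: "nat \<Rightarrow> 'a::hilbert_scalar^'n"
  shows "AP1 N p F G \<le> OP1 N p F G"
proof (cases "N = 0")
  case False
  let ?w = "\<lambda>i. \<bar>weight N CARD('n) p i\<bar>"
  have "(?w i * norm (F i) * norm (G i) + ?w i * norm (hip (G i) (F i))) / 2
      \<le> ?w i * norm (F i) * norm (G i)" for i
  proof -
    have "norm (hip (G i) (F i)) \<le> norm (F i) * norm (G i)"
      using norm_hip_le[of "G i" "F i"] by (simp add: mult.commute)
    then have "?w i * norm (hip (G i) (F i)) \<le> ?w i * norm (F i) * norm (G i)"
      by (simp add: mult.assoc mult_left_mono)
    then show ?thesis by (simp add: field_simps)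
  qed
  also have "?w i * norm (F i) * norm (G i) \<le> OP1 N p F G" if "i \<in> {1..N}" for i
    unfolding OP1_eq_Max using that by (intro Max_ge) auto
  finally show ?thesis
    unfolding AP1_eq_Max using False by (intro Max.boundedI) auto
qed (simp add: AP1_eq_Max OP1_eq_Max)

subsection \<open>Tight frames and their duals\<close>

lemma is_frame_if_reconstruction:
  fixes F G :: "nat \<Rightarrow> 'a::hilbert_scalar^'n"
  assumes rec: "\<And>f. f = (\<Sum>i=1..N. hip f (G i) *s F i)"
  shows "is_frame N G"
proof -
  define C where "C = (\<Sum>i=1..N. (norm (F i))^2)"
  define D where "D = (\<Sum>i=1..N. (norm (G i))^2) + 1"
  have lower: "(norm f)^2 \<le> (\<Sum>i=1..N. (norm (hip f (G i)))^2) * C" for f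
  proof -
    have "norm f = norm (\<Sum>i=1..N. hip f (G i) *s F i)"
      using rec by metis
    also have "\<dots> \<le> (\<Sum>i=1..N. norm (hip f (G i) *s F i))"
      by (rule norm_sum)
    also have "\<dots> = (\<Sum>i=1..N. \<bar>norm (hip f (G i))\<bar> * \<bar>norm (F i)\<bar>)"
      by (simp add: norm_smult_vec)
    also have "\<dots> \<le> L2_set (\<lambda>i. norm (hip f (G i))) {1..N} * L2_set (\<lambda>i. norm (F i)) {1..N}"
      by (rule L2_set_mult_ineq)
    finally have "(norm f)^2 \<le> (L2_set (\<lambda>i. norm (hip f (G i))) {1..N} * L2_set (\<lambda>i. norm (F i)) {1..N})^2"
      by (simp add: power_mono)
    then show ?thesis
      unfolding C_def by (simp add: power_mult_distrib L2_set_def sum_nonneg)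
  qed
  have "C > 0"
  proof (rule ccontr)
    assume "\<not> C > 0"
    moreover have "C \<ge> 0" unfolding C_def by (simp add: sum_nonneg)
    ultimately have "C = 0" by simp
    then show False using lower[of "axis undefined 1"] by simp
  qed
  then have "(1/C) * (norm f)^2 \<le> (\<Sum>i=1..N. (norm (hip f (G i)))^2)" for f
    using lower[of f] by (simp add: field_simps)
  moreover have "(\<Sum>i=1..N. (norm (hip f (G i)))^2) \<le> D * (norm f)^2" for f
  proof -
    have "(\<Sum>i=1..N. (norm (hip f (G i)))^2) \<le> (\<Sum>i=1..N. (norm f * norm (G i))^2)"
      by (intro sum_mono power_mono norm_hip_le) auto
    also have "\<dots> = (D - 1) * (norm f)^2"
      by (simp add: D_def power_mult_distrib sum_distrib_left mult.commute)
    also have "\<dots> \<le> D * (norm f)^2"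
      by (simp add: algebra_simps)
    finally show ?thesis .
  qed
  moreover have "D > 0" unfolding D_def by (simp add: add_nonneg_pos sum_nonneg)
  ultimately show ?thesis unfolding is_frame_def using \<open>C > 0\<close>
    by (intro exI[of _ "1/C"] exI[of _ D]) auto
qed

lemma symmetric_form_eq_scaled_inner:
  fixes B :: "'a::real_inner \<Rightarrow> 'a \<Rightarrow> real"
  assumes sym: "\<And>x y. B x y = B y x"
    and add: "\<And>x y z. B (x + y) z = B x z + B y z"
    and diag: "\<And>x. B x x = A * (norm x)^2"
  shows "B x y = A * inner x y"
proof -
  have "B (x + y) (x + y) = B x x + 2 * B x y + B y y"
    using add[of x y "x + y"] add[of x y x] add[of x y y] sym[of x "x + y"] sym[of y "x + y"]
      sym[of y x] by simp
  moreover have "(norm (x + y))^2 = (norm x)^2 + 2 * inner x y + (norm y)^2"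
    by (simp add: power2_norm_eq_inner inner_add_left inner_add_right inner_commute)
  ultimately show ?thesis
    using diag[of "x + y"] diag[of x] diag[of y] by (simp add: algebra_simps)
qed

lemma tight_frame_frame_op:
  fixes F :: "nat \<Rightarrow> 'a::hilbert_scalar^'n"
  assumes "tight_frame N F"
  obtains A where "A > 0" "N \<ge> 1" "\<And>f. frame_op N F f = A *\<^sub>R f"
proof -
  obtain A where A: "A > 0"
    and tight: "\<And>f. (\<Sum>i=1..N. (norm (hip f (F i)))^2) = A * (norm f)^2"
    using assms unfolding tight_frame_def by (metis order_antisym)
  \<comment> \<open>Polarizing the real part of the sesquilinear form suffices to identify S with A id.\<close>
  define B where "B x y = inner x (frame_op N F y)" for x y
  have B_eq: "B x y = (\<Sum>i=1..N. Re (to_cplx (hip x (F i)) * cnj (to_cplx (hip y (F i)))))" for x y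
    by (simp add: B_def frame_op_def inner_eq_Re_hip hip_sum_right hip_smult_right to_cplx_sum
        to_cplx_mult to_cplx_hconj Re_sum)
  have "B x y = A * inner x y" for x y
  proof (rule symmetric_form_eq_scaled_inner)
    show "B x y = B y x" for x y
      unfolding B_eq by (intro sum.cong) (auto simp: mult.commute)
    show "B (x + y) z = B x z + B y z" for x y z
      unfolding B_eq by (simp add: hip_add_left to_cplx_add distrib_right sum.distrib)
    show "B x x = A * (norm x)^2" for x
      unfolding B_eq tight[symmetric] complex_mult_cnj by (simp flip: cmod_power2 add: norm_to_cplx)
  qed
  then have "inner x (frame_op N F f - A *\<^sub>R f) = 0" for x f
    by (simp add: B_def inner_diff_right)
  then have "frame_op N F f = A *\<^sub>R f" for f
    by (metis inner_eq_zero_iff right_minus_eq)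
  moreover have "N \<ge> 1"
  proof (rule ccontr)
    assume "\<not> N \<ge> 1"
    then show False using tight[of "axis undefined 1"] A by simp
  qed
  ultimately show ?thesis using that A by blast
qed

lemma canon_dual_eq_scaled:
  fixes F :: "nat \<Rightarrow> 'a::hilbert_scalar^'n"
  assumes "A > 0" "\<And>f. frame_op N F f = A *\<^sub>R f"
  shows "canon_dual N F i = (1/A) *\<^sub>R F i"
  unfolding canon_dual_def
proof (rule the_equality)
  show "frame_op N F ((1/A) *\<^sub>R F i) = F i"
    using assms by simp
  fix g assume "frame_op N F g = F i"
  then have "A *\<^sub>R g = F i" using assms(2) by simp
  moreover have "g = (1/A) *\<^sub>R (A *\<^sub>R g)" using assms(1) by simp
  ultimately show "g = (1/A) *\<^sub>R F i" by simp
qed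

lemma is_dual_canon_dual:
  fixes F :: "nat \<Rightarrow> 'a::hilbert_scalar^'n"
  assumes "A > 0" "\<And>f. frame_op N F f = A *\<^sub>R f"
  shows "is_dual N F (canon_dual N F)"
proof -
  have "(\<Sum>i=1..N. hip f (F i) *s canon_dual N F i) = (1/A) *\<^sub>R frame_op N F f"
    and "(\<Sum>i=1..N. hip f (canon_dual N F i) *s F i) = (1/A) *\<^sub>R frame_op N F f" for f
    by (simp_all add: canon_dual_eq_scaled[OF assms] frame_op_def hip_scaleR_right
        scaleR_smult_left scaleR_smult_right scaleR_sum_right)
  then show ?thesis
    unfolding is_dual_def
    using assms is_frame_if_reconstruction[where F=F and G="canon_dual N F"] by simp
qed

lemma is_dual_affine_combination:
  fixes F G G' :: "nat \<Rightarrow> 'a::hilbert_scalar^'n"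
  assumes "is_dual N F G" "is_dual N F G'" "r + s = 1"
  shows "is_dual N F (\<lambda>i. r *\<^sub>R G i + s *\<^sub>R G' i)"
proof -
  have G: "(\<Sum>i=1..N. hip f (F i) *s G i) = f" "(\<Sum>i=1..N. hip f (G i) *s F i) = f"
    and G': "(\<Sum>i=1..N. hip f (F i) *s G' i) = f" "(\<Sum>i=1..N. hip f (G' i) *s F i) = f" for f
    using assms(1,2) unfolding is_dual_def by (metis (no_types))+
  have affine: "r *\<^sub>R f + s *\<^sub>R f = f" for f :: "'a^'n"
    using assms(3) by (metis scaleR_add_left scaleR_one)
  have "(\<Sum>i=1..N. hip f (F i) *s (r *\<^sub>R G i + s *\<^sub>R G' i))
      = r *\<^sub>R (\<Sum>i=1..N. hip f (F i) *s G i) + s *\<^sub>R (\<Sum>i=1..N. hip f (F i) *s G' i)" for f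
    by (simp add: vector_add_ldistrib scaleR_smult_right sum.distrib scaleR_sum_right)
  then have synthesis: "(\<Sum>i=1..N. hip f (F i) *s (r *\<^sub>R G i + s *\<^sub>R G' i)) = f" for f
    by (simp only: G G' affine)
  have "(\<Sum>i=1..N. hip f (r *\<^sub>R G i + s *\<^sub>R G' i) *s F i)
      = r *\<^sub>R (\<Sum>i=1..N. hip f (G i) *s F i) + s *\<^sub>R (\<Sum>i=1..N. hip f (G' i) *s F i)" for f
    by (simp add: hip_add_right hip_scaleR_right vector_sadd_rdistrib scaleR_smult_left sum.distrib
        scaleR_sum_right)
  then have analysis: "(\<Sum>i=1..N. hip f (r *\<^sub>R G i + s *\<^sub>R G' i) *s F i) = f" for f
    by (simp only: G G' affine)
  have "is_frame N (\<lambda>i. r *\<^sub>R G i + s *\<^sub>R G' i)"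
    by (rule is_frame_if_reconstruction[where F=F]) (simp only: analysis)
  then show ?thesis
    unfolding is_dual_def by (simp only: synthesis analysis simp_thms)
qed

subsection \<open>Moving along a segment without leaving a ball\<close>

lemma eventually_norm_add_scaleR_le:
  fixes c d :: "'a::real_inner"
  assumes "inner d c < 0 \<or> d = 0"
  shows "\<forall>\<^sub>F t in at_right 0. norm (c + t *\<^sub>R d) \<le> norm c"
proof (cases "d = 0")
  case False
  with assms have neg: "inner d c < 0" by simp
  have "norm (c + t *\<^sub>R d) \<le> norm c" if "0 < t" "t < - 2 * inner d c / (norm d)^2" for t
  proof -
    have "t * (t * (norm d)^2 + 2 * inner d c) \<le> 0"
      using that False by (intro mult_nonneg_nonpos) (auto simp: field_simps)
    moreover have "(norm (c + t *\<^sub>R d))^2 = (norm c)^2 + t * (t * (norm d)^2 + 2 * inner d c)"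
      unfolding power2_norm_eq_inner
      by (simp add: inner_add_left inner_add_right inner_commute algebra_simps)
    ultimately have "(norm (c + t *\<^sub>R d))^2 \<le> (norm c)^2"
      by simp
    then show ?thesis by (rule power2_le_imp_le) simp
  qed
  moreover have "- 2 * inner d c / (norm d)^2 > 0"
    using neg False by (intro divide_pos_pos) auto
  ultimately show ?thesis
    unfolding eventually_at_right_field by blast
qed simp

lemma inner_diff_neg_or_eq:
  fixes c g :: "'a::real_inner"
  assumes "c \<noteq> 0" and "norm c * norm g + inner g c \<le> 2 * (norm c)^2"
  shows "inner (g - c) c < 0 \<or> g = c"
proof (cases "inner (g - c) c < 0")
  case False
  then have ge: "inner g c \<ge> (norm c)^2"
    by (simp add: inner_diff_left power2_norm_eq_inner)
  moreover have "inner g c \<le> norm g * norm c"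
    by (rule norm_cauchy_schwarz)
  ultimately have "norm c * norm g \<le> norm c * norm c"
    using assms(2) by (simp add: power2_eq_square mult.commute)
  then have "norm g \<le> norm c"
    using assms(1) by simp
  then have "(norm g)^2 \<le> (norm c)^2"
    by (simp add: power_mono)
  then have "(norm (g - c))^2 \<le> 0"
    using ge by (simp add: power2_norm_eq_inner inner_diff_left inner_diff_right inner_commute)
  then show ?thesis by simp
qed simp

lemma eventually_weighted_norm_segment_le:
  fixes c g :: "'a::real_inner"
  assumes W: "W \<ge> 0" and c: "W * (norm c)^2 \<le> M"
    and g: "W * (norm c * norm g + inner g c) / 2 \<le> M"
  shows "\<forall>\<^sub>F t in at_right 0. W * norm c * norm ((1 - t) *\<^sub>R c + t *\<^sub>R g) \<le> M"
proof -
  have segment: "(1 - t) *\<^sub>R c + t *\<^sub>R g = c + t *\<^sub>R (g - c)" for t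
    by (simp add: algebra_simps)
  consider "W * (norm c)^2 < M" | "W = 0 \<or> c = 0" | "W > 0" "c \<noteq> 0" "W * (norm c)^2 = M"
    using W c by fastforce
  then show ?thesis
  proof cases
    case 1
    have "((\<lambda>t. W * norm c * norm (c + t *\<^sub>R (g - c))) \<longlongrightarrow> W * norm c * norm (c + 0 *\<^sub>R (g - c)))
        (at_right 0)"
      by (intro tendsto_intros)
    then have "\<forall>\<^sub>F t in at_right 0. W * norm c * norm (c + t *\<^sub>R (g - c)) < M"
      using 1 by (intro order_tendstoD) (simp_all add: power2_eq_square mult.assoc)
    then show ?thesis
      unfolding segment by eventually_elim simp
  next
    case 2
    then show ?thesis using c by auto
  next
    case 3
    then have "W * (norm c * norm g + inner g c) \<le> W * (2 * (norm c)^2)"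
      using g by (simp flip: 3(3))
    then have "norm c * norm g + inner g c \<le> 2 * (norm c)^2"
      using \<open>W > 0\<close> by (rule mult_left_le_imp_le)
    then have "inner (g - c) c < 0 \<or> g - c = 0"
      using inner_diff_neg_or_eq[OF \<open>c \<noteq> 0\<close>] by simp
    then have "\<forall>\<^sub>F t in at_right 0. norm (c + t *\<^sub>R (g - c)) \<le> norm c"
      by (rule eventually_norm_add_scaleR_le)
    then show ?thesis
      unfolding segment
    proof eventually_elim
      case (elim t)
      have "W * norm c * norm (c + t *\<^sub>R (g - c)) \<le> W * norm c * norm c"
        using elim 3 by (intro mult_left_mono) auto
      also have "\<dots> = M"
        using 3(3) by (simp add: power2_eq_square mult.assoc)
      finally show ?case .
    qed
  qed
qed

lemma unique_is_arg_min_transfer: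
  fixes f g :: "'b \<Rightarrow> 'c::linorder"
  assumes "P c" and "g c = f c" and g_le_f: "\<And>x. g x \<le> f x"
    and cong: "\<And>x. E x \<Longrightarrow> g x = g c"
    and push: "\<And>x. P x \<Longrightarrow> g x \<le> f c \<Longrightarrow> \<exists>y. P y \<and> f y \<le> f c \<and> (E y \<longrightarrow> E x)"
  shows "(is_arg_min f P c \<and> (\<forall>x. is_arg_min f P x \<longrightarrow> E x)) \<longleftrightarrow>
         (is_arg_min g P c \<and> (\<forall>x. is_arg_min g P x \<longrightarrow> E x))"
proof
  assume f_min: "is_arg_min f P c \<and> (\<forall>x. is_arg_min f P x \<longrightarrow> E x)"
  have E_if: "E x" if Px: "P x" and gx: "g x \<le> f c" for x
  proof -
    obtain y where "P y" "f y \<le> f c" "E y \<longrightarrow> E x"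
      using push[OF Px gx] by blast
    then have "is_arg_min f P y"
      using f_min by (auto simp: is_arg_min_linorder intro: order_trans)
    then show ?thesis using f_min \<open>E y \<longrightarrow> E x\<close> by blast
  qed
  have "g c \<le> g x" if "P x" for x
  proof (rule ccontr)
    assume "\<not> g c \<le> g x"
    then have "g x < g c" by simp
    moreover from this have "E x" using E_if[OF that] \<open>g c = f c\<close> by simp
    ultimately show False using cong by simp
  qed
  then have "is_arg_min g P c"
    using \<open>P c\<close> by (simp add: is_arg_min_linorder)
  moreover have "E x" if "is_arg_min g P x" for x
    using that E_if[of x] \<open>P c\<close> \<open>g c = f c\<close> unfolding is_arg_min_linorder by metis
  ultimately show "is_arg_min g P c \<and> (\<forall>x. is_arg_min g P x \<longrightarrow> E x)" by blast
next
  assume g_min: "is_arg_min g P c \<and> (\<forall>x. is_arg_min g P x \<longrightarrow> E x)"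
  then have "is_arg_min f P c"
    using \<open>g c = f c\<close> g_le_f by (auto simp: is_arg_min_linorder intro: order_trans)
  moreover have "E x" if "is_arg_min f P x" for x
  proof -
    have "g x \<le> g y" if "P y" for y
    proof -
      have "g x \<le> f x" by (rule g_le_f)
      also have "f x \<le> f c"
        using \<open>is_arg_min f P x\<close> \<open>P c\<close> by (simp add: is_arg_min_linorder)
      also have "f c = g c" using \<open>g c = f c\<close> ..
      also have "g c \<le> g y"
        using g_min \<open>P y\<close> by (simp add: is_arg_min_linorder)
      finally show ?thesis .
    qed
    then have "is_arg_min g P x"
      using that by (simp add: is_arg_min_linorder)
    then show ?thesis using g_min by blast
  qed
  ultimately show "is_arg_min f P c \<and> (\<forall>x. is_arg_min f P x \<longrightarrow> E x)" by blast
qed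

lemma inner_le_norm_hip: "inner x y \<le> norm (hip x (y::'a::hilbert_scalar^'n))"
  unfolding inner_eq_Re_hip using complex_Re_le_cmod norm_to_cplx by metis

lemma eventually_shifted_canon_dual_le:
  fixes F G :: "nat \<Rightarrow> 'a::hilbert_scalar^'n"
  assumes "A > 0" and S: "\<And>f. frame_op N F f = A *\<^sub>R f"
    and below: "AP1 N p F G \<le> OP1 N p F (canon_dual N F)" and i: "i \<in> {1..N}"
  shows "\<forall>\<^sub>F t in at_right 0. \<bar>weight N CARD('n) p i\<bar> * norm (F i) *
      norm ((1 - t) *\<^sub>R canon_dual N F i + t *\<^sub>R G i) \<le> OP1 N p F (canon_dual N F)"
proof -
  define c where "c = canon_dual N F"
  define M where "M = OP1 N p F c"
  define w where "w = \<bar>weight N CARD('n) p i\<bar>"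
  have F_eq: "F i = A *\<^sub>R c i"
    using \<open>A > 0\<close> by (simp add: c_def canon_dual_eq_scaled[OF \<open>A > 0\<close> S])
  have "w * norm (F i) * norm (c i) \<le> M"
    unfolding M_def OP1_eq_Max w_def using i by (intro Max_ge) auto
  then have c_le: "(w * A) * (norm (c i))^2 \<le> M"
    using \<open>A > 0\<close> by (simp add: F_eq power2_eq_square mult_ac)
  have "A * inner (G i) (c i) = inner (G i) (F i)"
    by (simp add: F_eq)
  also have "\<dots> \<le> norm (hip (G i) (F i))"
    by (rule inner_le_norm_hip)
  finally have "w * (A * inner (G i) (c i)) \<le> w * norm (hip (G i) (F i))"
    by (rule mult_left_mono) (simp add: w_def)
  moreover have "(w * A) * (norm (c i) * norm (G i) + inner (G i) (c i)) / 2
      = (w * norm (F i) * norm (G i) + w * (A * inner (G i) (c i))) / 2"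
    using \<open>A > 0\<close> by (simp add: F_eq algebra_simps)
  ultimately have "(w * A) * (norm (c i) * norm (G i) + inner (G i) (c i)) / 2
      \<le> (w * norm (F i) * norm (G i) + w * norm (hip (G i) (F i))) / 2"
    by simp
  also have "\<dots> \<le> AP1 N p F G"
    unfolding AP1_eq_Max w_def using i by (intro Max_ge) auto
  finally have G_le: "(w * A) * (norm (c i) * norm (G i) + inner (G i) (c i)) / 2 \<le> M"
    using below by (simp add: M_def c_def)
  have "w * A \<ge> 0"
    using \<open>A > 0\<close> by (simp add: w_def)
  from eventually_weighted_norm_segment_le[OF this c_le G_le]
  show ?thesis
    using \<open>A > 0\<close> by (simp add: F_eq M_def c_def w_def mult_ac)
qed

lemma tight_frame_shift_canon_dual:
  fixes F G :: "nat \<Rightarrow> 'a::hilbert_scalar^'n"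
  assumes "tight_frame N F" "is_dual N F G" "AP1 N p F G \<le> OP1 N p F (canon_dual N F)"
  obtains t where "t > 0"
    "is_dual N F (\<lambda>i. (1 - t) *\<^sub>R canon_dual N F i + t *\<^sub>R G i)"
    "OP1 N p F (\<lambda>i. (1 - t) *\<^sub>R canon_dual N F i + t *\<^sub>R G i) \<le> OP1 N p F (canon_dual N F)"
proof -
  obtain A where "A > 0" "N \<ge> 1" and S: "\<And>f. frame_op N F f = A *\<^sub>R f"
    using tight_frame_frame_op[OF assms(1)] by blast
  let ?c = "canon_dual N F" and ?w = "\<lambda>i. \<bar>weight N CARD('n) p i\<bar>"
  have "\<forall>\<^sub>F t in at_right 0. t > 0 \<and> (\<forall>i\<in>{1..N}.
      ?w i * norm (F i) * norm ((1 - t) *\<^sub>R ?c i + t *\<^sub>R G i) \<le> OP1 N p F ?c)"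
    using eventually_shifted_canon_dual_le[OF \<open>A > 0\<close> S assms(3)]
    by (intro eventually_conj eventually_at_right_less eventually_ball_finite) auto
  then obtain t where "t > 0" and t: "\<And>i. i \<in> {1..N} \<Longrightarrow>
      ?w i * norm (F i) * norm ((1 - t) *\<^sub>R ?c i + t *\<^sub>R G i) \<le> OP1 N p F ?c"
    using eventually_happens'[OF trivial_limit_at_right_real] by blast
  have "is_dual N F (\<lambda>i. (1 - t) *\<^sub>R ?c i + t *\<^sub>R G i)"
    using is_dual_canon_dual[OF \<open>A > 0\<close> S] assms(2)
    by (rule is_dual_affine_combination) simp
  moreover have "OP1 N p F (\<lambda>i. (1 - t) *\<^sub>R ?c i + t *\<^sub>R G i) \<le> OP1 N p F ?c"
    unfolding OP1_eq_Max[of N p F "\<lambda>i. (1 - t) *\<^sub>R ?c i + t *\<^sub>R G i"]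
    using \<open>N \<ge> 1\<close> t by (intro Max.boundedI) auto
  ultimately show ?thesis
    using that \<open>t > 0\<close> by blast
qed

lemma unique_POD1_iff_unique_PASOD1:
  fixes F :: "nat \<Rightarrow> 'a::hilbert_scalar^'n"
  assumes "tight_frame N F"
  shows "(is_POD1 N p F (canon_dual N F) \<and>
            (\<forall>G. is_POD1 N p F G \<longrightarrow> (\<forall>i\<in>{1..N}. G i = canon_dual N F i)))
         \<longleftrightarrow>
         (is_PASOD1 N p F (canon_dual N F) \<and>
            (\<forall>G. is_PASOD1 N p F G \<longrightarrow> (\<forall>i\<in>{1..N}. G i = canon_dual N F i)))"
proof -
  obtain A where "A > 0" and S: "\<And>f. frame_op N F f = A *\<^sub>R f"
    using tight_frame_frame_op[OF assms] by blast
  let ?c = "canon_dual N F"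
  have "is_POD1 N p F = is_arg_min (OP1 N p F) (is_dual N F)"
    and "is_PASOD1 N p F = is_arg_min (AP1 N p F) (is_dual N F)"
    by (simp_all add: fun_eq_iff is_POD1_def is_PASOD1_def is_arg_min_linorder)
  moreover
  have "(is_arg_min (OP1 N p F) (is_dual N F) ?c \<and>
          (\<forall>G. is_arg_min (OP1 N p F) (is_dual N F) G \<longrightarrow> (\<forall>i\<in>{1..N}. G i = ?c i)))
      \<longleftrightarrow> (is_arg_min (AP1 N p F) (is_dual N F) ?c \<and>
          (\<forall>G. is_arg_min (AP1 N p F) (is_dual N F) G \<longrightarrow> (\<forall>i\<in>{1..N}. G i = ?c i)))"
  proof (rule unique_is_arg_min_transfer)
    show "is_dual N F ?c"
      by (rule is_dual_canon_dual[OF \<open>A > 0\<close> S])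
    have "norm (hip (?c i) (F i)) = norm (F i) * norm (?c i)" for i
      using \<open>A > 0\<close> by (simp add: canon_dual_eq_scaled[OF \<open>A > 0\<close> S] hip_scaleR_left hip_self
          power2_eq_square)
    then show "AP1 N p F ?c = OP1 N p F ?c"
      unfolding AP1_eq_Max OP1_eq_Max by (simp add: mult_ac)
    show "AP1 N p F G \<le> OP1 N p F G" for G
      by (rule AP1_le_OP1)
    show "AP1 N p F G = AP1 N p F ?c" if "\<forall>i\<in>{1..N}. G i = ?c i" for G
      unfolding AP1_eq_Max using that by (intro arg_cong[where f=Max] image_cong) auto
    show "\<exists>G'. is_dual N F G' \<and> OP1 N p F G' \<le> OP1 N p F ?c \<and>
        ((\<forall>i\<in>{1..N}. G' i = ?c i) \<longrightarrow> (\<forall>i\<in>{1..N}. G i = ?c i))"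
      if dual: "is_dual N F G" and below: "AP1 N p F G \<le> OP1 N p F ?c" for G
    proof -
      obtain t where "t > 0" and shifted:
        "is_dual N F (\<lambda>i. (1 - t) *\<^sub>R ?c i + t *\<^sub>R G i)"
        "OP1 N p F (\<lambda>i. (1 - t) *\<^sub>R ?c i + t *\<^sub>R G i) \<le> OP1 N p F ?c"
        using tight_frame_shift_canon_dual[OF assms dual below] by blast
      have "G i = ?c i" if "(1 - t) *\<^sub>R ?c i + t *\<^sub>R G i = ?c i" for i
      proof -
        from that have "t *\<^sub>R (G i - ?c i) = 0"
          by (simp add: algebra_simps)
        then show ?thesis using \<open>t > 0\<close> by simp
      qed
      then show ?thesis using shifted by blast
    qed
  qed
  ultimately show ?thesis by simp
qed

theorem theorem3p6:
  shows "(\<forall>(F :: nat \<Rightarrow> real^'n) (N::nat) (p :: nat \<Rightarrow> real).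
            tight_frame N F \<and> prob_seq N p \<longrightarrow>
            ((is_POD1 N p F (canon_dual N F) \<and>
              (\<forall>G. is_POD1 N p F G \<longrightarrow> (\<forall>i\<in>{1..N}. G i = canon_dual N F i)))
             \<longleftrightarrow>
             (is_PASOD1 N p F (canon_dual N F) \<and>
              (\<forall>G. is_PASOD1 N p F G \<longrightarrow> (\<forall>i\<in>{1..N}. G i = canon_dual N F i)))))
       \<and>
         (\<forall>(F :: nat \<Rightarrow> complex^'m) (N::nat) (p :: nat \<Rightarrow> real).
            tight_frame N F \<and> prob_seq N p \<longrightarrow>
            ((is_POD1 N p F (canon_dual N F) \<and>
              (\<forall>G. is_POD1 N p F G \<longrightarrow> (\<forall>i\<in>{1..N}. G i = canon_dual N F i)))
             \<longleftrightarrow>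
             (is_PASOD1 N p F (canon_dual N F) \<and>
              (\<forall>G. is_PASOD1 N p F G \<longrightarrow> (\<forall>i\<in>{1..N}. G i = canon_dual N F i)))))"
  using unique_POD1_iff_unique_PASOD1 by meson

end
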